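(* No rank $16$ rootless integral lattice $Q$ with $\mathcal{D}(Q)\cong5^4$ is isometric to a sublattice of $HS_{16}$.
   Context: All lattices are positive definite; rootless means no vectors of norm $2$; $\mathcal{D}(L)=L^*/L$. $HS_{16}$ denotes the rank $16$ even unimodular lattice not isometric to $E_8\perp E_8$ (the lattice $D_{16}^+$, whose root sublattice is $D_{16}$). *)

theory Defs
  imports "HOL-Analysis.Analysis" "HOL-Algebra.Product_Groups" "HOL-Algebra.Elementary_Groups"
begin

text \<open>A lattice of rank 16 is represented (up to isometry) by its Gram matrix
  G with respect to a Z-basis: the lattice is Z^16 (integer coordinate vectors
  inside R^16) with bilinear form (x,y) |-> x^T G y.  Integral means G has
  integer entries.\<close>

definition bil :: "real^16^16 \<Rightarrow> real^16 \<Rightarrow> real^16 \<Rightarrow> real" where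
  "bil G x y = x \<bullet> (G *v y)"

definition intvecs :: "(real^16) set" where
  "intvecs = {x. \<forall>i. x $ i \<in> \<int>}"

definition gram :: "int^16^16 \<Rightarrow> real^16^16" where
  "gram G = (\<chi> i j. of_int (G $ i $ j))"

definition pos_def_integral_lattice :: "int^16^16 \<Rightarrow> bool" where
  "pos_def_integral_lattice G \<longleftrightarrow>
     (\<forall>i j. G $ i $ j = G $ j $ i) \<and>
     (\<forall>x::real^16. x \<noteq> 0 \<longrightarrow> bil (gram G) x x > 0)"

definition rootless :: "int^16^16 \<Rightarrow> bool" where
  "rootless G \<longleftrightarrow> (\<forall>x\<in>intvecs. bil (gram G) x x \<noteq> 2)"

definition dual_lattice :: "int^16^16 \<Rightarrow> (real^16) set" where
  "dual_lattice G = {x. \<forall>y\<in>intvecs. bil (gram G) x y \<in> \<int>}"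

definition dual_group :: "int^16^16 \<Rightarrow> (real^16) monoid" where
  "dual_group G = \<lparr>carrier = dual_lattice G, monoid.mult = (+), one = 0\<rparr>"

definition discriminant_group :: "int^16^16 \<Rightarrow> (real^16) set monoid" where
  "discriminant_group G = dual_group G Mod intvecs"

definition elem_ab_5_4 :: "(nat \<Rightarrow> int) monoid" where
  "elem_ab_5_4 = product_group {..<4::nat} (\<lambda>_. integer_mod_group 5)"

definition D16 :: "(real^16) set" where
  "D16 = {x\<in>intvecs. even (\<lfloor>\<Sum>i\<in>UNIV. x $ i\<rfloor>)}"

definition HS16 :: "(real^16) set" where
  "HS16 = D16 \<union> (\<lambda>x. x + (\<chi> i. 1/2)) ` D16"

definition isometric_to_sublattice_HS16 :: "int^16^16 \<Rightarrow> bool" where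
  "isometric_to_sublattice_HS16 G \<longleftrightarrow>
     (\<exists>b :: 16 \<Rightarrow> real^16. (\<forall>i. b i \<in> HS16) \<and>
        (\<forall>i j. b i \<bullet> b j = of_int (G $ i $ j)))"

end

theory Submission
  imports Defs
begin

text \<open>
  Suppose the basis of \<open>Q\<close> is sent isometrically into \<open>HS\<^sub>1\<^sub>6\<close>. Pulling \<open>HS\<^sub>1\<^sub>6\<close> back
  gives an integral overlattice \<open>H\<close> with \<open>Q \<subseteq> H \<subseteq> Q\<^sup>*\<close>, so \<open>H/Q\<close> is a subgroup of
  \<open>\<D>(Q) \<cong> 5\<^sup>4\<close>. The preimages of the 32 vectors \<open>\<pm>2e\<^sub>i \<in> HS\<^sub>1\<^sub>6\<close> lie in \<open>H\<close>, and
  at most one coincidence (\<open>2e\<^sub>i \<equiv> -2e\<^sub>i\<close>, forcing both to be \<open>0\<close>) can occur among their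
  classes: otherwise \<open>2x \<in> Q\<close> for the preimage \<open>x\<close> of a root \<open>\<pm>e\<^sub>i \<pm> e\<^sub>j\<close>, and with
  \<open>5x \<in> Q\<close> this puts a norm 2 vector into \<open>Q\<close>. Hence \<open>|H/Q| \<ge> 31\<close>, so \<open>|H/Q|\<close> is 125 or
  625 and \<open>\<D>(Q)\<close> is generated by \<open>H/Q\<close> and a single class \<open>y\<close>. Pairing with \<open>y\<close> maps
  \<open>H/Q\<close> into \<open>(1/5)\<int>/\<int>\<close>, so some \<open>h \<in> H - Q\<close> pairs integrally with \<open>y\<close>, and
  (as \<open>H\<close> is integral) with all of \<open>Q\<^sup>*\<close>; but then \<open>h \<in> Q\<^sup>*\<^sup>* = Q\<close>.
\<close>

section \<open>Integer vectors and \<open>D\<^sub>1\<^sub>6\<^sup>+\<close>\<close>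

lemma intvecs_zero [simp]: "0 \<in> intvecs"
  by (simp add: intvecs_def)

lemma intvecs_add: "x \<in> intvecs \<Longrightarrow> y \<in> intvecs \<Longrightarrow> x + y \<in> intvecs"
  by (simp add: intvecs_def)

lemma intvecs_uminus: "x \<in> intvecs \<Longrightarrow> - x \<in> intvecs"
  by (simp add: intvecs_def)

lemma intvecs_diff: "x \<in> intvecs \<Longrightarrow> y \<in> intvecs \<Longrightarrow> x - y \<in> intvecs"
  by (simp add: intvecs_def)

lemma intvecs_scaleR: "c \<in> \<int> \<Longrightarrow> x \<in> intvecs \<Longrightarrow> c *\<^sub>R x \<in> intvecs"
  by (simp add: intvecs_def)

lemma intvecs_if_coprime_multiples:
  assumes "coprime m n" "of_int m *\<^sub>R x \<in> intvecs" "of_int n *\<^sub>R x \<in> intvecs"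
  shows "x \<in> intvecs"
proof -
  obtain u v where uv: "u * m + v * n = 1"
    using assms(1) bezout_int[of m n] by auto
  have "x = of_int u *\<^sub>R (of_int m *\<^sub>R x) + of_int v *\<^sub>R (of_int n *\<^sub>R x)"
    by (simp flip: scaleR_add_left of_int_mult of_int_add add: uv)
  also have "\<dots> \<in> intvecs"
    using intvecs_add[OF intvecs_scaleR[OF _ assms(2)] intvecs_scaleR[OF _ assms(3)]] by simp
  finally show ?thesis .
qed

definition half_ones :: "real^16" where
  "half_ones = (\<chi> i. 1/2)"

lemma inner_vec16: "(x::real^16) \<bullet> y = (\<Sum>i\<in>UNIV. x $ i * y $ i)"
  by (simp add: inner_vec_def)

lemma D16_iff: "x \<in> D16 \<longleftrightarrow> x \<in> intvecs \<and> (\<exists>s. even s \<and> (\<Sum>i\<in>UNIV. x $ i) = of_int s)"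
proof -
  have "x \<in> intvecs \<Longrightarrow> (\<Sum>i\<in>UNIV. x $ i) \<in> \<int>"
    by (auto simp: intvecs_def intro: Ints_sum)
  then show ?thesis
    unfolding D16_def by (auto elim!: Ints_cases)
qed

lemma HS16_iff: "v \<in> HS16 \<longleftrightarrow> v \<in> D16 \<or> v - half_ones \<in> D16"
  unfolding HS16_def half_ones_def[symmetric] by (auto simp: image_iff) (metis diff_add_cancel)

lemma D16_add: "x \<in> D16 \<Longrightarrow> y \<in> D16 \<Longrightarrow> x + y \<in> D16"
  unfolding D16_iff by (auto simp: sum.distrib intro: intvecs_add) (metis even_add of_int_add)

lemma D16_uminus: "x \<in> D16 \<Longrightarrow> - x \<in> D16"
  unfolding D16_iff by (auto simp: sum_negf intro: intvecs_uminus) (metis even_minus of_int_minus)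

lemma D16_even_sum:
  assumes "x \<in> intvecs" "(\<Sum>i\<in>UNIV. x $ i) = of_int s" "even s"
  shows "x \<in> D16"
  using assms unfolding D16_iff by blast

lemma two_half_ones_D16: "2 *\<^sub>R half_ones \<in> D16"
  by (rule D16_even_sum[of _ 16]) (simp_all add: half_ones_def intvecs_def)

lemma HS16_zero: "0 \<in> HS16"
  by (simp add: HS16_iff D16_iff)

lemma HS16_add:
  assumes "u \<in> HS16" "v \<in> HS16"
  shows "u + v \<in> HS16"
proof -
  have "u + v = (u - half_ones) + (v - half_ones) + 2 *\<^sub>R half_ones"
    by (simp add: algebra_simps scaleR_2)
  moreover have "u + v - half_ones = (u - half_ones) + v" "u + v - half_ones = u + (v - half_ones)"
    by (simp_all add: algebra_simps)
  ultimately show ?thesis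
    using assms unfolding HS16_iff by (metis D16_add two_half_ones_D16)
qed

lemma HS16_uminus:
  assumes "u \<in> HS16"
  shows "- u \<in> HS16"
proof -
  have "- u - half_ones = - (u - half_ones) + - (2 *\<^sub>R half_ones)"
    by (simp add: algebra_simps scaleR_2)
  then show ?thesis
    using assms unfolding HS16_iff by (metis D16_add D16_uminus two_half_ones_D16)
qed

lemma HS16_scaleR_nat: "u \<in> HS16 \<Longrightarrow> of_nat k *\<^sub>R u \<in> HS16"
  by (induction k) (auto simp: HS16_zero scaleR_add_left intro: HS16_add)

lemma HS16_scaleR:
  assumes "c \<in> \<int>" "u \<in> HS16"
  shows "c *\<^sub>R u \<in> HS16"
proof -
  obtain k where c: "c = of_int k"
    using assms(1) by (auto elim: Ints_cases)
  show ?thesis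
  proof (cases "k \<ge> 0")
    case True
    then have "c = of_nat (nat k)"
      by (simp add: c)
    then show ?thesis
      using HS16_scaleR_nat[OF assms(2)] by simp
  next
    case False
    then have "c *\<^sub>R u = - (of_nat (nat (- k)) *\<^sub>R u)"
      by (simp add: c)
    then show ?thesis
      using HS16_uminus[OF HS16_scaleR_nat[OF assms(2)]] by simp
  qed
qed

lemma HS16_sum: "(\<And>i. i \<in> A \<Longrightarrow> f i \<in> HS16) \<Longrightarrow> sum f A \<in> HS16"
  by (induction A rule: infinite_finite_induct) (auto simp: HS16_zero intro: HS16_add)

lemma D16_inner_Ints: "x \<in> D16 \<Longrightarrow> y \<in> D16 \<Longrightarrow> x \<bullet> y \<in> \<int>"
  unfolding D16_iff inner_vec16 intvecs_def by (auto intro!: Ints_sum Ints_mult)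

lemma D16_inner_half_ones: "x \<in> D16 \<Longrightarrow> x \<bullet> half_ones \<in> \<int>"
proof -
  assume "x \<in> D16"
  then obtain s where s: "even s" "(\<Sum>i\<in>UNIV. x $ i) = of_int s"
    unfolding D16_iff by auto
  have "x \<bullet> half_ones = (\<Sum>i\<in>UNIV. x $ i) / 2"
    by (simp add: inner_vec16 half_ones_def sum_divide_distrib)
  also have "\<dots> = of_int (s div 2)"
    using s by (auto elim!: evenE)
  finally show ?thesis by simp
qed

lemma HS16_inner_Ints:
  assumes "u \<in> HS16" "v \<in> HS16"
  shows "u \<bullet> v \<in> \<int>"
proof -
  let ?h = half_ones
  have "u \<bullet> v = u \<bullet> (v - ?h) + u \<bullet> ?h"
    and "u \<bullet> v = (u - ?h) \<bullet> v + v \<bullet> ?h"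
    and "u \<bullet> v = (u - ?h) \<bullet> (v - ?h) + (u - ?h) \<bullet> ?h + (v - ?h) \<bullet> ?h + ?h \<bullet> ?h"
    by (simp_all add: algebra_simps inner_diff_left inner_diff_right inner_commute)
  moreover have "?h \<bullet> ?h = 4"
    by (simp add: inner_vec16 half_ones_def)
  ultimately show ?thesis
    using assms unfolding HS16_iff
    by (metis D16_inner_Ints D16_inner_half_ones inner_commute Ints_add Ints_numeral)
qed

lemma sum_axis_one: "(\<Sum>k\<in>UNIV. axis i (1::real) $ k) = 1"
  by (simp add: axis_def)

lemma axis_intvecs: "axis i 1 \<in> intvecs"
  by (simp add: axis_def intvecs_def)

lemma two_axis_HS16: "2 *\<^sub>R axis i 1 \<in> HS16"
  unfolding HS16_iff
  by (rule disjI1, rule D16_even_sum[of _ 2])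
     (simp_all add: intvecs_scaleR axis_intvecs sum_axis_one flip: sum_distrib_left)

lemma signed_axis_diff_HS16:
  assumes "s \<in> {1, -1}" "t \<in> {1, -1}"
  shows "of_int s *\<^sub>R axis i 1 - of_int t *\<^sub>R axis j 1 \<in> HS16"
  unfolding HS16_iff
  by (rule disjI1, rule D16_even_sum[of _ "s - t"])
     (use assms in \<open>auto simp: intvecs_diff intvecs_scaleR axis_intvecs sum_subtractf sum_axis_one
        simp flip: sum_distrib_left\<close>)

lemma inner_signed_axis_diff:
  assumes "i \<noteq> j" "s \<in> {1, -1}" "t \<in> {1, -1}"
  shows "(of_int s *\<^sub>R axis i (1::real) - of_int t *\<^sub>R axis j 1) \<bullet>
           (of_int s *\<^sub>R axis i 1 - of_int t *\<^sub>R axis j 1) = 2"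
  using assms by (auto simp: inner_diff_left inner_diff_right inner_axis_axis inner_real_def)

section \<open>Dual lattices and discriminant groups\<close>

lemma bil_add_left: "bil A (x + y) z = bil A x z + bil A y z"
  by (simp add: bil_def inner_add_left)

lemma bil_diff_left: "bil A (x - y) z = bil A x z - bil A y z"
  by (simp add: bil_def inner_diff_left)

lemma bil_uminus_left: "bil A (- x) z = - bil A x z"
  by (simp add: bil_def)

lemma bil_zero_left: "bil A 0 z = 0"
  by (simp add: bil_def)

lemma bil_scaleR_left: "bil A (c *\<^sub>R x) z = c * bil A x z"
  by (simp add: bil_def)

lemma bil_add_right: "bil A z (x + y) = bil A z x + bil A z y"
  by (simp add: bil_def matrix_vector_right_distrib inner_add_right)

lemma bil_scaleR_right: "bil A z (c *\<^sub>R x) = c * bil A z x"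
  by (simp add: bil_def matrix_vector_mult_scaleR)

lemma bil_intvecs_Ints: "x \<in> intvecs \<Longrightarrow> y \<in> intvecs \<Longrightarrow> bil (gram G) x y \<in> \<int>"
  unfolding bil_def inner_vec16 intvecs_def gram_def
  by (auto simp: matrix_vector_mult_def intro!: Ints_sum Ints_mult)

lemma intvecs_subset_dual_lattice: "intvecs \<subseteq> dual_lattice G"
  unfolding dual_lattice_def using bil_intvecs_Ints by blast

lemma dual_lattice_zero: "0 \<in> dual_lattice G"
  by (simp add: dual_lattice_def bil_zero_left)

lemma dual_lattice_add: "x \<in> dual_lattice G \<Longrightarrow> y \<in> dual_lattice G \<Longrightarrow> x + y \<in> dual_lattice G"
  by (simp add: dual_lattice_def bil_add_left)

lemma dual_lattice_uminus: "x \<in> dual_lattice G \<Longrightarrow> - x \<in> dual_lattice G"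
  by (simp add: dual_lattice_def bil_uminus_left)

lemma dual_lattice_scaleR: "c \<in> \<int> \<Longrightarrow> x \<in> dual_lattice G \<Longrightarrow> c *\<^sub>R x \<in> dual_lattice G"
  by (simp add: dual_lattice_def bil_scaleR_left)

lemma carrier_dual_group [simp]: "carrier (dual_group G) = dual_lattice G"
  and mult_dual_group [simp]: "x \<otimes>\<^bsub>dual_group G\<^esub> y = x + y"
  and one_dual_group [simp]: "\<one>\<^bsub>dual_group G\<^esub> = 0"
  by (simp_all add: dual_group_def)

lemma comm_group_dual_group: "comm_group (dual_group G)"
proof (rule comm_groupI)
  fix x assume "x \<in> carrier (dual_group G)"
  then show "\<exists>y\<in>carrier (dual_group G). y \<otimes>\<^bsub>dual_group G\<^esub> x = \<one>\<^bsub>dual_group G\<^esub>"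
    by (intro bexI[of _ "- x"]) (auto intro: dual_lattice_uminus)
qed (auto simp: dual_lattice_add dual_lattice_zero add.assoc add.commute)

lemma group_dual_group: "group (dual_group G)"
  using comm_group_dual_group by (rule comm_group.axioms)

lemma inv_dual_group: "x \<in> dual_lattice G \<Longrightarrow> inv\<^bsub>dual_group G\<^esub> x = - x"
  by (rule group.inv_equality[OF group_dual_group]) (auto intro: dual_lattice_uminus)

lemma normal_intvecs_dual_group: "intvecs \<lhd> dual_group G"
proof (rule comm_group.subgroup_imp_normal[OF comm_group_dual_group],
       rule group.subgroupI[OF group_dual_group])
  show "intvecs \<subseteq> carrier (dual_group G)"
    using intvecs_subset_dual_lattice by simp
  show "intvecs \<noteq> {}"
    using intvecs_zero by blast
  fix a b assume "a \<in> intvecs" "b \<in> intvecs"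
  then show "inv\<^bsub>dual_group G\<^esub> a \<in> intvecs" "a \<otimes>\<^bsub>dual_group G\<^esub> b \<in> intvecs"
    using intvecs_subset_dual_lattice[of G] by (simp_all add: subsetD inv_dual_group intvecs_uminus intvecs_add)
qed

lemma group_discriminant_group: "group (discriminant_group G)"
  unfolding discriminant_group_def by (rule normal.factorgroup_is_group[OF normal_intvecs_dual_group])

definition disc_class :: "int^16^16 \<Rightarrow> real^16 \<Rightarrow> (real^16) set" where
  "disc_class G x = intvecs #>\<^bsub>dual_group G\<^esub> x"

lemma disc_class_image: "disc_class G x = (\<lambda>h. h + x) ` intvecs"
  by (auto simp: disc_class_def r_coset_def)

lemma disc_class_eq_iff: "disc_class G x = disc_class G y \<longleftrightarrow> x - y \<in> intvecs"
proof
  assume "disc_class G x = disc_class G y"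
  moreover have "x \<in> disc_class G x"
    unfolding disc_class_image by (rule image_eqI[of _ _ 0]) simp_all
  ultimately obtain h where "h \<in> intvecs" "x = h + y"
    unfolding disc_class_image by auto
  then show "x - y \<in> intvecs"
    by simp
next
  assume d: "x - y \<in> intvecs"
  have sub: "(\<lambda>h. h + a) ` intvecs \<subseteq> (\<lambda>h. h + b) ` intvecs" if "a - b \<in> intvecs" for a b
  proof
    fix z assume "z \<in> (\<lambda>h. h + a) ` intvecs"
    then obtain h where "h \<in> intvecs" "z = (h + (a - b)) + b"
      by auto
    then show "z \<in> (\<lambda>h. h + b) ` intvecs"
      using intvecs_add[OF _ that] by blast
  qed
  have "y - x \<in> intvecs"
    using intvecs_uminus[OF d] by simp
  with d show "disc_class G x = disc_class G y"
    unfolding disc_class_image by (intro subset_antisym sub)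
qed

lemma carrier_discriminant_group: "carrier (discriminant_group G) = disc_class G ` dual_lattice G"
  unfolding discriminant_group_def disc_class_def by (simp add: carrier_FactGroup)

lemma mult_discriminant_group:
  "x \<in> dual_lattice G \<Longrightarrow> y \<in> dual_lattice G \<Longrightarrow>
    disc_class G x \<otimes>\<^bsub>discriminant_group G\<^esub> disc_class G y = disc_class G (x + y)"
  unfolding discriminant_group_def disc_class_def
  using normal.rcos_sum[OF normal_intvecs_dual_group[of G], of x y] by simp

lemma one_discriminant_group: "\<one>\<^bsub>discriminant_group G\<^esub> = disc_class G 0"
  by (simp add: discriminant_group_def disc_class_image)

lemma inv_discriminant_group:
  "x \<in> dual_lattice G \<Longrightarrow> inv\<^bsub>discriminant_group G\<^esub> (disc_class G x) = disc_class G (- x)"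
  by (rule group.inv_equality[OF group_discriminant_group])
     (auto simp: mult_discriminant_group one_discriminant_group carrier_discriminant_group
       dual_lattice_uminus)

lemma pow_discriminant_group:
  "x \<in> dual_lattice G \<Longrightarrow>
    disc_class G x [^]\<^bsub>discriminant_group G\<^esub> n = disc_class G (of_nat n *\<^sub>R x)"
  by (induction n)
     (simp_all add: one_discriminant_group mult_discriminant_group dual_lattice_scaleR
       scaleR_add_left add.commute)

lemma subgroup_disc_class_image:
  assumes "X \<subseteq> dual_lattice G" "0 \<in> X"
    and "\<And>x y. x \<in> X \<Longrightarrow> y \<in> X \<Longrightarrow> x + y \<in> X" "\<And>x. x \<in> X \<Longrightarrow> - x \<in> X"
  shows "subgroup (disc_class G ` X) (discriminant_group G)"
  by (rule group.subgroupI[OF group_discriminant_group])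
     (use assms in \<open>auto simp: carrier_discriminant_group inv_discriminant_group
       mult_discriminant_group subsetD\<close>)

lemma card_disc_class_image_dvd:
  assumes "X \<subseteq> dual_lattice G" "0 \<in> X"
    and "\<And>x y. x \<in> X \<Longrightarrow> y \<in> X \<Longrightarrow> x + y \<in> X" "\<And>x. x \<in> X \<Longrightarrow> - x \<in> X"
  shows "card (disc_class G ` X) dvd card (disc_class G ` dual_lattice G)"
  using group.lagrange[OF group_discriminant_group subgroup_disc_class_image[OF assms]]
  by (metis carrier_discriminant_group dvd_triv_right order_def)

lemma card_elem_ab_5_4: "card (carrier elem_ab_5_4) = 625"
  by (simp add: elem_ab_5_4_def carrier_integer_mod_group card_PiE)

lemma pow_elem_ab_5_4:
  "a \<in> carrier elem_ab_5_4 \<Longrightarrow> a [^]\<^bsub>elem_ab_5_4\<^esub> n = (\<lambda>i\<in>{..<4}. int n * a i mod 5)"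
  by (induction n)
     (auto simp: elem_ab_5_4_def carrier_integer_mod_group PiE_iff restrict_def fun_eq_iff
       mod_add_left_eq mod_add_right_eq distrib_right add.commute)

lemma pow_five_elem_ab_5_4:
  "a \<in> carrier elem_ab_5_4 \<Longrightarrow> a [^]\<^bsub>elem_ab_5_4\<^esub> (5::nat) = \<one>\<^bsub>elem_ab_5_4\<^esub>"
  using pow_elem_ab_5_4[of a 5] by (simp add: elem_ab_5_4_def)

lemma iso_pow_eq_one:
  assumes "G \<cong> H" "group G" "group H" "x \<in> carrier G"
    and "\<And>a. a \<in> carrier H \<Longrightarrow> a [^]\<^bsub>H\<^esub> n = \<one>\<^bsub>H\<^esub>"
  shows "x [^]\<^bsub>G\<^esub> (n::nat) = \<one>\<^bsub>G\<^esub>"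
proof -
  obtain \<phi> where \<phi>: "\<phi> \<in> iso G H"
    using assms(1) unfolding is_iso_def by blast
  then have hom: "\<phi> \<in> hom G H" and inj: "inj_on \<phi> (carrier G)"
    and into: "\<phi> x \<in> carrier H"
    using assms(4) by (auto simp: iso_def bij_betw_def)
  have "\<phi> (x [^]\<^bsub>G\<^esub> n) = \<phi> \<one>\<^bsub>G\<^esub>"
    using hom_nat_pow[OF hom assms(4,2,3)] assms(5)[OF into] hom_one[OF hom assms(2,3)] by simp
  then show ?thesis
    using inj_onD[OF inj] assms(2,4) by (simp add: group.is_monoid monoid.nat_pow_closed)
qed

lemma five_scaleR_dual_lattice_intvecs:
  assumes "discriminant_group G \<cong> elem_ab_5_4" "x \<in> dual_lattice G"
  shows "5 *\<^sub>R x \<in> intvecs"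
proof -
  have "group elem_ab_5_4"
    by (simp add: elem_ab_5_4_def)
  moreover have "disc_class G x \<in> carrier (discriminant_group G)"
    using assms(2) by (simp add: carrier_discriminant_group)
  ultimately have "disc_class G x [^]\<^bsub>discriminant_group G\<^esub> (5::nat) = \<one>\<^bsub>discriminant_group G\<^esub>"
    using iso_pow_eq_one[OF assms(1) group_discriminant_group] pow_five_elem_ab_5_4 by blast
  then show ?thesis
    using assms(2) by (simp add: pow_discriminant_group one_discriminant_group disc_class_eq_iff)
qed

section \<open>Sublattices of \<open>HS\<^sub>1\<^sub>6\<close>\<close>

locale HS16_sublattice =
  fixes G :: "int^16^16" and b :: "16 \<Rightarrow> real^16"
  assumes pos_def: "pos_def_integral_lattice G"
    and basis_HS16: "\<And>i. b i \<in> HS16"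
    and inner_basis: "\<And>i j. b i \<bullet> b j = of_int (G $ i $ j)"
begin

definition embed :: "real^16 \<Rightarrow> real^16" where
  "embed x = (\<Sum>i\<in>UNIV. x $ i *\<^sub>R b i)"

lemma bil_embed: "bil (gram G) x y = embed x \<bullet> embed y"
proof -
  have "bil (gram G) x y = (\<Sum>i\<in>UNIV. x $ i * (\<Sum>j\<in>UNIV. of_int (G $ i $ j) * y $ j))"
    by (simp add: bil_def inner_vec16 matrix_vector_mult_def gram_def)
  also have "\<dots> = (\<Sum>i\<in>UNIV. \<Sum>j\<in>UNIV. x $ i * y $ j * (b i \<bullet> b j))"
    by (simp add: inner_basis sum_distrib_left mult_ac)
  also have "\<dots> = embed x \<bullet> embed y"
    unfolding embed_def inner_sum_left inner_sum_right by (subst sum.swap) (simp add: mult_ac)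
  finally show ?thesis .
qed

lemma bil_commute: "bil (gram G) x y = bil (gram G) y x"
  by (simp add: bil_embed inner_commute)

lemma linear_embed: "linear embed"
  by (rule linearI) (simp_all add: embed_def scaleR_add_left sum.distrib scaleR_sum_right)

lemma bil_self_pos: "x \<noteq> 0 \<Longrightarrow> bil (gram G) x x > 0"
  using pos_def unfolding pos_def_integral_lattice_def by blast

lemma surj_embed: "surj embed"
proof -
  have "inj embed"
  proof (rule injI)
    fix x y assume "embed x = embed y"
    then have "bil (gram G) (x - y) (x - y) = 0"
      by (simp add: bil_embed linear_diff[OF linear_embed])
    then show "x = y"
      using bil_self_pos[of "x - y"] by fastforce
  qed
  then show ?thesis
    using linear_embed by (simp add: linear_injective_imp_surjective)
qed

lemma surj_gram_mult: "surj (\<lambda>x. gram G *v x)"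
proof -
  have "inj (\<lambda>x. gram G *v x)"
  proof (rule injI)
    fix x y assume "gram G *v x = gram G *v y"
    then have "bil (gram G) (x - y) (x - y) = 0"
      by (simp add: bil_def matrix_vector_mult_diff_distrib)
    then show "x = y"
      using bil_self_pos[of "x - y"] by fastforce
  qed
  then show ?thesis
    by (simp add: linear_injective_imp_surjective)
qed

lemma intvecs_if_bil_dual_lattice_Ints:
  assumes "\<And>y. y \<in> dual_lattice G \<Longrightarrow> bil (gram G) h y \<in> \<int>"
  shows "h \<in> intvecs"
  unfolding intvecs_def
proof (intro CollectI allI)
  fix j
  obtain y where y: "gram G *v y = axis j 1"
    using surj_gram_mult by (metis surjD)
  have "y \<in> dual_lattice G"
    unfolding dual_lattice_def
  proof (intro CollectI ballI)
    fix z assume "z \<in> intvecs"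
    have "bil (gram G) y z = bil (gram G) z y"
      by (rule bil_commute)
    also have "\<dots> = z $ j"
      by (simp add: bil_def y inner_axis)
    finally show "bil (gram G) y z \<in> \<int>"
      using \<open>z \<in> intvecs\<close> by (simp add: intvecs_def)
  qed
  then have "bil (gram G) h y \<in> \<int>"
    by (rule assms)
  then show "h $ j \<in> \<int>"
    by (simp add: bil_def y inner_axis)
qed

definition overlattice :: "(real^16) set" where
  "overlattice = {x. embed x \<in> HS16}"

lemma overlattice_zero: "0 \<in> overlattice"
  by (simp add: overlattice_def linear_0[OF linear_embed] HS16_zero)

lemma overlattice_add: "x \<in> overlattice \<Longrightarrow> y \<in> overlattice \<Longrightarrow> x + y \<in> overlattice"
  by (simp add: overlattice_def linear_add[OF linear_embed] HS16_add)

lemma overlattice_uminus: "x \<in> overlattice \<Longrightarrow> - x \<in> overlattice"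
  by (simp add: overlattice_def linear_neg[OF linear_embed] HS16_uminus)

lemma overlattice_diff: "x \<in> overlattice \<Longrightarrow> y \<in> overlattice \<Longrightarrow> x - y \<in> overlattice"
  using overlattice_add[OF _ overlattice_uminus] by fastforce

lemma bil_overlattice_Ints: "x \<in> overlattice \<Longrightarrow> y \<in> overlattice \<Longrightarrow> bil (gram G) x y \<in> \<int>"
  by (simp add: overlattice_def bil_embed HS16_inner_Ints)

lemma intvecs_subset_overlattice: "intvecs \<subseteq> overlattice"
proof
  fix x assume "x \<in> intvecs"
  then have "x $ i *\<^sub>R b i \<in> HS16" for i
    by (intro HS16_scaleR basis_HS16) (simp add: intvecs_def)
  then show "x \<in> overlattice"
    unfolding overlattice_def embed_def by (simp add: HS16_sum)
qed

lemma overlattice_subset_dual_lattice: "overlattice \<subseteq> dual_lattice G"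
  unfolding dual_lattice_def using bil_overlattice_Ints intvecs_subset_overlattice by blast

definition unit_preimage :: "16 \<Rightarrow> real^16" where
  "unit_preimage i = inv_into UNIV embed (axis i 1)"

lemma embed_unit_preimage: "embed (unit_preimage i) = axis i 1"
  unfolding unit_preimage_def by (rule surj_f_inv_f[OF surj_embed])

definition double_unit :: "16 \<Rightarrow> int \<Rightarrow> real^16" where
  "double_unit i s = of_int s *\<^sub>R 2 *\<^sub>R unit_preimage i"

lemma double_unit_overlattice: "double_unit i s \<in> overlattice"
  using HS16_scaleR[OF _ two_axis_HS16]
  by (simp add: double_unit_def overlattice_def linear_scale[OF linear_embed] embed_unit_preimage)

end

section \<open>Rootless sublattices with discriminant group \<open>5\<^sup>4\<close>\<close>

lemma dvd_625_ge_31: "(d::nat) dvd 625 \<Longrightarrow> 31 \<le> d \<Longrightarrow> d = 125 \<or> d = 625"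
proof -
  assume "d dvd 625" "31 \<le> d"
  moreover obtain m where "m \<le> 4" "d = 5 ^ m"
    using divides_primepow_nat[of 5 d 4] \<open>d dvd 625\<close> by auto
  moreover have "m = 0 \<or> m = 1 \<or> m = 2 \<or> m = 3 \<or> m = 4"
    using \<open>m \<le> 4\<close> by arith
  ultimately show ?thesis
    by auto
qed

locale rootless_5_4_sublattice = HS16_sublattice +
  assumes rootless: "rootless G"
    and disc_iso: "discriminant_group G \<cong> elem_ab_5_4"
begin

lemma card_disc_classes: "card (disc_class G ` dual_lattice G) = 625"
  using iso_same_card[OF disc_iso] by (simp add: card_elem_ab_5_4 carrier_discriminant_group)

lemma finite_disc_classes: "finite (disc_class G ` dual_lattice G)"
  using card_disc_classes by (intro card_ge_0_finite) simp

lemma intvecs_if_two_scaleR_intvecs: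
  assumes "x \<in> dual_lattice G" "2 *\<^sub>R x \<in> intvecs"
  shows "x \<in> intvecs"
  using intvecs_if_coprime_multiples[of 2 5 x] assms
    five_scaleR_dual_lattice_intvecs[OF disc_iso assms(1)] by simp

text \<open>Two distinct classes among the \<open>\<pm>2e\<^sub>i\<close> would differ by twice a root of \<open>Q\<close>.\<close>

lemma disc_class_double_unit_neq:
  assumes "i \<noteq> j" "s \<in> {1, -1}" "t \<in> {1, -1}"
  shows "disc_class G (double_unit i s) \<noteq> disc_class G (double_unit j t)"
proof
  define x where "x = of_int s *\<^sub>R unit_preimage i - of_int t *\<^sub>R unit_preimage j"
  assume "disc_class G (double_unit i s) = disc_class G (double_unit j t)"
  moreover have "double_unit i s - double_unit j t = 2 *\<^sub>R x"
    by (simp add: double_unit_def x_def algebra_simps)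
  ultimately have "2 *\<^sub>R x \<in> intvecs"
    by (simp add: disc_class_eq_iff)
  moreover have ex: "embed x = of_int s *\<^sub>R axis i 1 - of_int t *\<^sub>R axis j 1"
    by (simp add: x_def linear_diff[OF linear_embed] linear_scale[OF linear_embed]
        embed_unit_preimage)
  then have "x \<in> overlattice"
    using signed_axis_diff_HS16[OF assms(2,3)] by (simp add: overlattice_def)
  ultimately have "x \<in> intvecs"
    using overlattice_subset_dual_lattice by (blast intro: intvecs_if_two_scaleR_intvecs)
  moreover have "bil (gram G) x x = 2"
    using inner_signed_axis_diff[OF assms] by (simp add: bil_embed ex)
  ultimately show False
    using rootless unfolding rootless_def by blast
qed

lemma disc_class_double_unit_opposite:
  assumes "disc_class G (double_unit i 1) = disc_class G (double_unit i (-1))"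
  shows "disc_class G (double_unit i 1) = disc_class G 0"
proof -
  have "2 *\<^sub>R double_unit i 1 \<in> intvecs"
    using assms by (simp add: disc_class_eq_iff double_unit_def)
  then have "double_unit i 1 \<in> intvecs"
    using double_unit_overlattice overlattice_subset_dual_lattice
    by (blast intro: intvecs_if_two_scaleR_intvecs)
  then show ?thesis
    by (simp add: disc_class_eq_iff)
qed


lemma finite_overlattice_classes: "finite (disc_class G ` overlattice)"
  using finite_subset[OF _ finite_disc_classes] overlattice_subset_dual_lattice by blast

lemma card_overlattice_classes_ge: "31 \<le> card (disc_class G ` overlattice)"
proof -
  define A where "A = range (\<lambda>i. disc_class G (double_unit i 1))"
  define B where "B = range (\<lambda>i. disc_class G (double_unit i (-1)))"
  have "inj (\<lambda>i. disc_class G (double_unit i 1))" "inj (\<lambda>i. disc_class G (double_unit i (-1)))"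
    using disc_class_double_unit_neq by (auto intro!: injI)
  then have card_AB: "card A = 16" "card B = 16"
    unfolding A_def B_def by (simp_all add: card_image)
  have "A \<inter> B \<subseteq> {disc_class G 0}"
  proof
    fix k assume "k \<in> A \<inter> B"
    then obtain i j where k: "k = disc_class G (double_unit i 1)" "k = disc_class G (double_unit j (-1))"
      unfolding A_def B_def by blast
    then have "i = j"
      using disc_class_double_unit_neq[of i j 1 "-1"] by fastforce
    then show "k \<in> {disc_class G 0}"
      using k disc_class_double_unit_opposite[of i] by simp
  qed
  then have "card (A \<inter> B) \<le> 1"
    using card_mono[of "{disc_class G 0}"] by fastforce
  moreover have "card (A \<union> B) + card (A \<inter> B) = 32"
    using card_Un_Int[of A B] card_AB unfolding A_def B_def by simp
  moreover have "card (A \<union> B) \<le> card (disc_class G ` overlattice)"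
    unfolding A_def B_def using double_unit_overlattice
    by (intro card_mono[OF finite_overlattice_classes]) blast
  ultimately show ?thesis
    by linarith
qed

lemma card_overlattice_classes:
  "card (disc_class G ` overlattice) = 125 \<or> card (disc_class G ` overlattice) = 625"
  using card_disc_class_image_dvd[OF overlattice_subset_dual_lattice overlattice_zero
      overlattice_add overlattice_uminus]
  by (intro dvd_625_ge_31 card_overlattice_classes_ge) (simp add: card_disc_classes)

definition overlattice_adjoin :: "real^16 \<Rightarrow> (real^16) set" where
  "overlattice_adjoin y = {h + of_int r *\<^sub>R y | h r. h \<in> overlattice}"

lemma overlattice_subset_adjoin: "overlattice \<subseteq> overlattice_adjoin y"
  unfolding overlattice_adjoin_def by (force intro: exI[of _ 0])

lemma mem_overlattice_adjoin: "y \<in> overlattice_adjoin y"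
  unfolding overlattice_adjoin_def using overlattice_zero by (force intro: exI[of _ 1])

lemma overlattice_adjoin_subset_dual_lattice:
  "y \<in> dual_lattice G \<Longrightarrow> overlattice_adjoin y \<subseteq> dual_lattice G"
  using overlattice_subset_dual_lattice
  by (auto simp: overlattice_adjoin_def intro!: dual_lattice_add dual_lattice_scaleR)

lemma card_overlattice_adjoin_classes_dvd:
  assumes "y \<in> dual_lattice G"
  shows "card (disc_class G ` overlattice_adjoin y) dvd 625"
proof -
  have "x + x' \<in> overlattice_adjoin y" "- x \<in> overlattice_adjoin y"
    if x: "x \<in> overlattice_adjoin y" and x': "x' \<in> overlattice_adjoin y" for x x'
  proof -
    obtain h r h' r' where "x = h + of_int r *\<^sub>R y" "x' = h' + of_int r' *\<^sub>R y"
      "h \<in> overlattice" "h' \<in> overlattice"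
      using x x' unfolding overlattice_adjoin_def by blast
    then have "x + x' = (h + h') + of_int (r + r') *\<^sub>R y" "- x = (- h) + of_int (- r) *\<^sub>R y"
      "h + h' \<in> overlattice" "- h \<in> overlattice"
      by (auto simp: algebra_simps scaleR_add_left overlattice_add overlattice_uminus)
    then show "x + x' \<in> overlattice_adjoin y" "- x \<in> overlattice_adjoin y"
      unfolding overlattice_adjoin_def by blast+
  qed
  moreover have "0 \<in> overlattice_adjoin y"
    using overlattice_subset_adjoin overlattice_zero by blast
  ultimately show ?thesis
    using card_disc_class_image_dvd[OF overlattice_adjoin_subset_dual_lattice[OF assms]]
      card_disc_classes by simp
qed

text \<open>Since \<open>H/Q\<close> has index at most 5 in \<open>\<D>(Q)\<close>, one further generator suffices.\<close>

lemma exists_overlattice_adjoin_generator: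
  "\<exists>y\<in>dual_lattice G. disc_class G ` overlattice_adjoin y = disc_class G ` dual_lattice G"
proof (cases "card (disc_class G ` overlattice) = 625")
  case True
  have "overlattice_adjoin 0 = overlattice"
    by (simp add: overlattice_adjoin_def)
  moreover have "disc_class G ` overlattice = disc_class G ` dual_lattice G"
    using True card_disc_classes overlattice_subset_dual_lattice
    by (intro card_subset_eq[OF finite_disc_classes] image_mono) simp_all
  ultimately show ?thesis
    using dual_lattice_zero by metis
next
  case False
  then have card_H: "card (disc_class G ` overlattice) = 125"
    using card_overlattice_classes by simp
  then have "disc_class G ` overlattice \<noteq> disc_class G ` dual_lattice G"
    using card_disc_classes by auto
  then obtain y where y: "y \<in> dual_lattice G" "disc_class G y \<notin> disc_class G ` overlattice"
    using overlattice_subset_dual_lattice by blast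
  have sub: "disc_class G ` overlattice_adjoin y \<subseteq> disc_class G ` dual_lattice G"
    by (rule image_mono[OF overlattice_adjoin_subset_dual_lattice[OF y(1)]])
  have "disc_class G ` overlattice \<subset> disc_class G ` overlattice_adjoin y"
    using overlattice_subset_adjoin mem_overlattice_adjoin y(2) by blast
  then have "125 < card (disc_class G ` overlattice_adjoin y)"
    using psubset_card_mono[OF finite_subset[OF sub finite_disc_classes]] card_H by metis
  then have "card (disc_class G ` overlattice_adjoin y) = 625"
    using dvd_625_ge_31[OF card_overlattice_adjoin_classes_dvd[OF y(1)]] by auto
  then show ?thesis
    using card_subset_eq[OF finite_disc_classes sub] card_disc_classes y(1) by auto
qed


lemma intvecs_if_bil_generator_Ints:
  assumes y: "y \<in> dual_lattice G" "disc_class G ` overlattice_adjoin y = disc_class G ` dual_lattice G"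
    and h: "h \<in> overlattice" "bil (gram G) h y \<in> \<int>"
  shows "h \<in> intvecs"
proof (rule intvecs_if_bil_dual_lattice_Ints)
  fix z assume "z \<in> dual_lattice G"
  then obtain w where "w \<in> overlattice_adjoin y" "disc_class G z = disc_class G w"
    using y(2) by (metis imageE imageI)
  then obtain h' r where h': "h' \<in> overlattice" and d: "z - (h' + of_int r *\<^sub>R y) \<in> intvecs"
    by (auto simp: overlattice_adjoin_def disc_class_eq_iff)
  have "z = h' + of_int r *\<^sub>R y + (z - (h' + of_int r *\<^sub>R y))"
    by simp
  then have "bil (gram G) h z = bil (gram G) h h' + of_int r * bil (gram G) h y
      + bil (gram G) h (z - (h' + of_int r *\<^sub>R y))"
    by (metis bil_add_right bil_scaleR_right)
  moreover have "bil (gram G) h h' \<in> \<int>"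
    using h(1) h' by (rule bil_overlattice_Ints)
  moreover have "bil (gram G) h (z - (h' + of_int r *\<^sub>R y)) \<in> \<int>"
    using h(1) overlattice_subset_dual_lattice d by (auto simp: dual_lattice_def)
  ultimately show "bil (gram G) h z \<in> \<int>"
    using h(2) by simp
qed

lemma five_bil_dual_lattice_Ints:
  assumes "x \<in> dual_lattice G" "y \<in> dual_lattice G"
  shows "5 * bil (gram G) x y \<in> \<int>"
proof -
  have "5 * bil (gram G) x y = bil (gram G) y (5 *\<^sub>R x)"
    by (simp add: bil_scaleR_right bil_commute[of x])
  then show ?thesis
    using assms five_scaleR_dual_lattice_intvecs[OF disc_iso] by (simp add: dual_lattice_def)
qed

text \<open>Pairing with \<open>y\<close> maps the at least 31 classes of \<open>H/Q\<close> into \<open>(1/5)\<int>/\<int>\<close>.\<close>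

lemma exists_overlattice_bil_Ints:
  assumes "y \<in> dual_lattice G"
  shows "\<exists>h\<in>overlattice. h \<notin> intvecs \<and> bil (gram G) h y \<in> \<int>"
proof -
  let ?W = "disc_class G ` overlattice"
  define rep where "rep = inv_into overlattice (disc_class G)"
  have rep: "rep k \<in> overlattice" "disc_class G (rep k) = k" if "k \<in> ?W" for k
    using that by (simp_all add: rep_def inv_into_into f_inv_into_f)
  define f where "f k = \<lfloor>5 * bil (gram G) (rep k) y\<rfloor> mod 5" for k
  have "f ` ?W \<subseteq> {0..<5}"
    by (auto simp: f_def)
  then have "card (f ` ?W) < card ?W"
    using card_mono[of "{0..<5::int}" "f ` ?W"] card_overlattice_classes_ge by simp
  then obtain k1 k2 where k: "k1 \<in> ?W" "k2 \<in> ?W" "k1 \<noteq> k2" "f k1 = f k2"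
    using pigeonhole[of f ?W] unfolding inj_on_def by blast
  obtain a1 a2 where a: "5 * bil (gram G) (rep k1) y = of_int a1" "5 * bil (gram G) (rep k2) y = of_int a2"
    using five_bil_dual_lattice_Ints[OF _ assms] rep(1)[OF k(1)] rep(1)[OF k(2)]
      overlattice_subset_dual_lattice by (metis Ints_cases subsetD)
  then obtain m where "a1 - a2 = 5 * m"
    using k(4) unfolding f_def by (metis floor_of_int mod_eq_dvd_iff dvdE)
  then have "bil (gram G) (rep k1 - rep k2) y = of_int m"
    using a by (simp add: bil_diff_left)
  moreover have "rep k1 - rep k2 \<notin> intvecs"
    using rep[OF k(1)] rep[OF k(2)] k(3) by (metis disc_class_eq_iff)
  moreover have "rep k1 - rep k2 \<in> overlattice"
    using rep(1)[OF k(1)] rep(1)[OF k(2)] by (rule overlattice_diff)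
  ultimately show ?thesis
    by auto
qed

lemma inconsistent: False
proof -
  obtain y where y: "y \<in> dual_lattice G"
    "disc_class G ` overlattice_adjoin y = disc_class G ` dual_lattice G"
    using exists_overlattice_adjoin_generator by blast
  then obtain h where "h \<in> overlattice" "h \<notin> intvecs" "bil (gram G) h y \<in> \<int>"
    using exists_overlattice_bil_Ints by blast
  then show False
    using intvecs_if_bil_generator_Ints[OF y] by blast
qed

end

theorem lemma4p2:
  fixes G :: "int^16^16"
  assumes "pos_def_integral_lattice G"
    and "rootless G"
    and "discriminant_group G \<cong> elem_ab_5_4"
  shows "\<not> isometric_to_sublattice_HS16 G"
proof
  assume "isometric_to_sublattice_HS16 G"
  then obtain b where "\<forall>i. b i \<in> HS16" "\<forall>i j. b i \<bullet> b j = of_int (G $ i $ j)"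
    unfolding isometric_to_sublattice_HS16_def by blast
  then interpret rootless_5_4_sublattice G b
    using assms by unfold_locales auto
  show False
    by (rule inconsistent)
qed

end
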